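(* Let $(J,\mathcal F)$ and $w^S_j>0$ be as in the context, let $\mathbf c$ be $\mathcal F$-admissible, and let $\mathrm{AG}_2$ on input $\mathbf c$ produce $\boldsymbol\pi$, $\boldsymbol\nu$, sets $S_k$ and quantities $\nu^{S_k}_j$ ($j\in S_k$). Then for every $1\le m\le n$, $$\nu_{\pi_m}=\min\{\nu^{S_m}_j:j\in S_m\}.$$
   Context: $J$ finite, $|J|=n$; $\mathcal F\subseteq2^J$ with $\emptyset\in\mathcal F$, each nonempty $S\in\mathcal F$ having nonempty $\partial^-S=\{j\in S:S\setminus\{j\}\in\mathcal F\}$, each $S\in\mathcal F\ne J$ having $j\notin S$ with $S\cup\{j\}\in\mathcal F$. Coefficients $w^S_j>0$ for $j\in S\in\mathcal F$. $\mathrm{AG}_2$ on input $\mathbf c$: $S_1=J$, $\nu^{S_1}_j=c_j/w^{S_1}_j$ ($j\in J$), $\pi_1\in\arg\min\{\nu^{S_1}_j:j\in\partial^-S_1\}$, $\nu_{\pi_1}=\nu^{S_1}_{\pi_1}$; for $k=2..n$: $S_k=S_{k-1}\setminus\{\pi_{k-1}\}$, $\nu^{S_k}_j=\nu^{S_{k-1}}_j+(w^{S_{k-1}}_j/w^{S_k}_j-1)[\nu^{S_{k-1}}_j-\nu^{S_{k-1}}_{\pi_{k-1}}]$ ($j\in S_k$), $\pi_k\in\arg\min\{\nu^{S_k}_j:j\in\partial^-S_k\}$, $\nu_{\pi_k}=\nu^{S_k}_{\pi_k}$. $\mathbf c$ is $\mathcal F$-admissible if the output satisfies $\nu_{\pi_1}\le\cdots\le\nu_{\pi_n}$.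 *)

theory Defs
  imports Complex_Main
begin

definition lower_bd :: "'a set set \<Rightarrow> 'a set \<Rightarrow> 'a set" where
  "lower_bd F S = {j \<in> S. S - {j} \<in> F}"

definition AG_setting :: "'a set \<Rightarrow> 'a set set \<Rightarrow> ('a set \<Rightarrow> 'a \<Rightarrow> real) \<Rightarrow> bool" where
  "AG_setting J F w \<longleftrightarrow>
     finite J \<and> F \<subseteq> Pow J \<and> {} \<in> F \<and>
     (\<forall>S\<in>F. S \<noteq> {} \<longrightarrow> lower_bd F S \<noteq> {}) \<and>
     (\<forall>S\<in>F. S \<noteq> J \<longrightarrow> (\<exists>j\<in>J - S. insert j S \<in> F)) \<and>
     (\<forall>S\<in>F. \<forall>j\<in>S. w S j > 0)"

text \<open>Sets S_k of AG_2 (1-based: S_1 = J, S_k = S_(k-1) - {pi_(k-1)});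
  index 0 is an unused dummy.\<close>
primrec AG_S :: "'a set \<Rightarrow> (nat \<Rightarrow> 'a) \<Rightarrow> nat \<Rightarrow> 'a set" where
  "AG_S J \<pi> 0 = J"
| "AG_S J \<pi> (Suc k) = (if k = 0 then J else AG_S J \<pi> k - {\<pi> k})"

text \<open>Quantities nu^(S_k)_j of AG_2 (1-based; index 0 is an unused dummy).\<close>
primrec AG_nu :: "'a set \<Rightarrow> ('a set \<Rightarrow> 'a \<Rightarrow> real) \<Rightarrow> ('a \<Rightarrow> real) \<Rightarrow> (nat \<Rightarrow> 'a)
                   \<Rightarrow> nat \<Rightarrow> 'a \<Rightarrow> real" where
  "AG_nu J w c \<pi> 0 j = c j / w J j"
| "AG_nu J w c \<pi> (Suc k) j =
     (if k = 0 then c j / w J j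
      else AG_nu J w c \<pi> k j
           + (w (AG_S J \<pi> k) j / w (AG_S J \<pi> (Suc k)) j - 1)
             * (AG_nu J w c \<pi> k j - AG_nu J w c \<pi> k (\<pi> k)))"

definition AG2_run :: "'a set \<Rightarrow> 'a set set \<Rightarrow> ('a set \<Rightarrow> 'a \<Rightarrow> real) \<Rightarrow> ('a \<Rightarrow> real)
                       \<Rightarrow> (nat \<Rightarrow> 'a) \<Rightarrow> bool" where
  "AG2_run J F w c \<pi> \<longleftrightarrow>
     (\<forall>k\<in>{1..card J}. \<pi> k \<in> lower_bd F (AG_S J \<pi> k) \<and>
        (\<forall>j\<in>lower_bd F (AG_S J \<pi> k). AG_nu J w c \<pi> k (\<pi> k) \<le> AG_nu J w c \<pi> k j))"

definition AG_out :: "'a set \<Rightarrow> ('a set \<Rightarrow> 'a \<Rightarrow> real) \<Rightarrow> ('a \<Rightarrow> real) \<Rightarrow> (nat \<Rightarrow> 'a)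
                      \<Rightarrow> nat \<Rightarrow> real" where
  "AG_out J w c \<pi> k = AG_nu J w c \<pi> k (\<pi> k)"

text \<open>F-admissibility: the output of the run is nondecreasing.\<close>
definition AG2_admissible_run :: "'a set \<Rightarrow> 'a set set \<Rightarrow> ('a set \<Rightarrow> 'a \<Rightarrow> real)
                                  \<Rightarrow> ('a \<Rightarrow> real) \<Rightarrow> (nat \<Rightarrow> 'a) \<Rightarrow> bool" where
  "AG2_admissible_run J F w c \<pi> \<longleftrightarrow>
     AG2_run J F w c \<pi> \<and>
     (\<forall>k. 1 \<le> k \<and> k < card J \<longrightarrow> AG_out J w c \<pi> k \<le> AG_out J w c \<pi> (Suc k))"

end

theory Submission
  imports Defs
begin

text \<open>If some j in S_m had nu^{S_m}_j < nu_{pi_m}, then j is not pi_m and survives into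
  S_{m+1}, and the update rule multiplies nu_j - nu_{pi_m} by the positive factor
  w^{S_m}_j / w^{S_{m+1}}_j, so nu^{S_{m+1}}_j < nu_{pi_m} <= nu_{pi_{m+1}} by admissibility.
  Inductively j is never removed, contradicting S_{n+1} = {}.\<close>

lemma ground_set_mem_if_extendable:
  assumes "finite J" "F \<subseteq> Pow J" "F \<noteq> {}"
    and "\<forall>S\<in>F. S \<noteq> J \<longrightarrow> (\<exists>j\<in>J - S. insert j S \<in> F)"
  shows "J \<in> F"
proof -
  have "finite F"
    using assms(1,2) by (meson finite_Pow_iff finite_subset)
  then obtain S where S: "S \<in> F" and S_max: "\<And>T. T \<in> F \<Longrightarrow> S \<subseteq> T \<Longrightarrow> S = T"
    using finite_has_maximal[OF _ assms(3)] by blast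
  show ?thesis
  proof (rule ccontr)
    assume "J \<notin> F"
    with S assms(4) obtain j where "j \<notin> S" "insert j S \<in> F"
      by auto
    with S_max show False
      by blast
  qed
qed

lemma AG_setting_J_in_F: "AG_setting J F w \<Longrightarrow> J \<in> F"
  unfolding AG_setting_def by (intro ground_set_mem_if_extendable) auto

lemma AG_setting_w_pos: "AG_setting J F w \<Longrightarrow> S \<in> F \<Longrightarrow> j \<in> S \<Longrightarrow> w S j > 0"
  unfolding AG_setting_def by auto

lemma AG_S_Suc_0 [simp]: "AG_S J \<pi> (Suc 0) = J"
  by (simp add: AG_S.simps)

lemma AG_S_Suc [simp]: "k \<noteq> 0 \<Longrightarrow> AG_S J \<pi> (Suc k) = AG_S J \<pi> k - {\<pi> k}"
  by (simp add: AG_S.simps)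

declare AG_S.simps(2) [simp del]

lemma AG_S_subset: "AG_S J \<pi> k \<subseteq> J"
  by (induction k) (auto simp: AG_S.simps)

lemma finite_AG_S: "AG_setting J F w \<Longrightarrow> finite (AG_S J \<pi> k)"
  by (rule finite_subset[OF AG_S_subset]) (simp add: AG_setting_def)

lemma AG2_run_pi_lower_bd:
  "AG2_run J F w c \<pi> \<Longrightarrow> 1 \<le> k \<Longrightarrow> k \<le> card J \<Longrightarrow> \<pi> k \<in> lower_bd F (AG_S J \<pi> k)"
  unfolding AG2_run_def by auto

lemma AG2_run_pi_mem:
  "AG2_run J F w c \<pi> \<Longrightarrow> 1 \<le> k \<Longrightarrow> k \<le> card J \<Longrightarrow> \<pi> k \<in> AG_S J \<pi> k"
  using AG2_run_pi_lower_bd by (fastforce simp: lower_bd_def)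

lemma AG2_run_S_in_F:
  assumes "AG_setting J F w" "AG2_run J F w c \<pi>" "1 \<le> k" "k \<le> Suc (card J)"
  shows "AG_S J \<pi> k \<in> F"
proof (cases "k = 1")
  case True
  then show ?thesis
    using AG_setting_J_in_F[OF assms(1)] by simp
next
  case False
  then obtain k' where k': "k = Suc k'" "1 \<le> k'" "k' \<le> card J"
    using assms(3,4) by (cases k) auto
  then show ?thesis
    using AG2_run_pi_lower_bd[OF assms(2) k'(2,3)] by (simp add: lower_bd_def)
qed

lemma AG2_run_card_S:
  assumes "AG_setting J F w" "AG2_run J F w c \<pi>" "1 \<le> k" "k \<le> Suc (card J)"
  shows "card (AG_S J \<pi> k) = Suc (card J) - k"
  using assms(3,4)
proof (induction k rule: dec_induct)
  case base
  then show ?case by simp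
next
  case (step k)
  then have "\<pi> k \<in> AG_S J \<pi> k"
    using AG2_run_pi_mem[OF assms(2)] by simp
  with step finite_AG_S[OF assms(1)] show ?case
    by simp
qed

lemma AG2_run_S_exhausted:
  assumes "AG_setting J F w" "AG2_run J F w c \<pi>"
  shows "AG_S J \<pi> (Suc (card J)) = {}"
proof -
  have "card (AG_S J \<pi> (Suc (card J))) = 0"
    using AG2_run_card_S[OF assms, of "Suc (card J)"] by (simp del: AG_S_Suc)
  then show ?thesis
    using finite_AG_S[OF assms(1)] by (simp del: AG_S_Suc)
qed

lemma AG_nu_Suc_diff:
  assumes "1 \<le> k"
  shows "AG_nu J w c \<pi> (Suc k) j - AG_out J w c \<pi> k
    = w (AG_S J \<pi> k) j / w (AG_S J \<pi> (Suc k)) j * (AG_nu J w c \<pi> k j - AG_out J w c \<pi> k)"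
  using assms by (simp add: AG_out_def algebra_simps del: AG_S_Suc)

lemma AG2_run_below_out_Suc:
  assumes setting: "AG_setting J F w" and run: "AG2_run J F w c \<pi>"
    and k: "1 \<le> k" "k \<le> card J"
    and j: "j \<in> AG_S J \<pi> k" and below: "AG_nu J w c \<pi> k j < AG_out J w c \<pi> k"
  shows "j \<in> AG_S J \<pi> (Suc k)" "AG_nu J w c \<pi> (Suc k) j < AG_out J w c \<pi> k"
proof -
  have "j \<noteq> \<pi> k"
    using below by (auto simp: AG_out_def)
  with j k show j': "j \<in> AG_S J \<pi> (Suc k)"
    by simp
  have "w (AG_S J \<pi> k) j > 0"
    using AG_setting_w_pos[OF setting AG2_run_S_in_F[OF setting run] j] k by simp
  moreover have "w (AG_S J \<pi> (Suc k)) j > 0"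
    using AG_setting_w_pos[OF setting AG2_run_S_in_F[OF setting run] j'] k by simp
  ultimately have "w (AG_S J \<pi> k) j / w (AG_S J \<pi> (Suc k)) j * (AG_nu J w c \<pi> k j - AG_out J w c \<pi> k) < 0"
    using below by (intro mult_pos_neg) auto
  then show "AG_nu J w c \<pi> (Suc k) j < AG_out J w c \<pi> k"
    using AG_nu_Suc_diff[OF k(1)] by (metis diff_less_0_iff_less)
qed

lemma AG2_admissible_run_below_out_persists:
  assumes setting: "AG_setting J F w" and adm: "AG2_admissible_run J F w c \<pi>"
    and m: "1 \<le> m" and j: "j \<in> AG_S J \<pi> m" and below: "AG_nu J w c \<pi> m j < AG_out J w c \<pi> m"
    and k: "m \<le> k" "k \<le> card J"
  shows "j \<in> AG_S J \<pi> k \<and> AG_nu J w c \<pi> k j < AG_out J w c \<pi> k"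
  using k
proof (induction k rule: dec_induct)
  case base
  then show ?case using j below by simp
next
  case (step k)
  have run: "AG2_run J F w c \<pi>"
    and mono: "AG_out J w c \<pi> k \<le> AG_out J w c \<pi> (Suc k)"
    using adm step m unfolding AG2_admissible_run_def by auto
  have "j \<in> AG_S J \<pi> (Suc k)" "AG_nu J w c \<pi> (Suc k) j < AG_out J w c \<pi> k"
    using AG2_run_below_out_Suc[OF setting run, of k j] step m by auto
  with mono show ?case
    by simp
qed

lemma AG2_admissible_run_out_le:
  assumes setting: "AG_setting J F w" and adm: "AG2_admissible_run J F w c \<pi>"
    and m: "1 \<le> m" "m \<le> card J" and j: "j \<in> AG_S J \<pi> m"
  shows "AG_out J w c \<pi> m \<le> AG_nu J w c \<pi> m j"
proof (rule ccontr)
  assume "\<not> ?thesis"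
  then have "j \<in> AG_S J \<pi> (card J) \<and> AG_nu J w c \<pi> (card J) j < AG_out J w c \<pi> (card J)"
    using AG2_admissible_run_below_out_persists[OF setting adm m(1) j] m by simp
  moreover have run: "AG2_run J F w c \<pi>"
    using adm unfolding AG2_admissible_run_def by simp
  ultimately have "j \<in> AG_S J \<pi> (Suc (card J))"
    using AG2_run_below_out_Suc[OF setting run] m by auto
  then show False
    using AG2_run_S_exhausted[OF setting run] by simp
qed

theorem proposition2:
  fixes J :: "'a set" and F :: "'a set set" and w :: "'a set \<Rightarrow> 'a \<Rightarrow> real"
    and c :: "'a \<Rightarrow> real" and \<pi> :: "nat \<Rightarrow> 'a"
  assumes "AG_setting J F w"
    and "AG2_admissible_run J F w c \<pi>"
  shows "\<forall>m\<in>{1..card J}.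
           AG_out J w c \<pi> m = Min ((\<lambda>j. AG_nu J w c \<pi> m j) ` AG_S J \<pi> m)"
proof
  fix m assume m: "m \<in> {1..card J}"
  have "\<pi> m \<in> AG_S J \<pi> m"
    using assms(2) m AG2_run_pi_mem unfolding AG2_admissible_run_def by auto
  then show "AG_out J w c \<pi> m = Min ((\<lambda>j. AG_nu J w c \<pi> m j) ` AG_S J \<pi> m)"
    using AG2_admissible_run_out_le[OF assms] finite_AG_S[OF assms(1)] m
    by (intro Min_eqI[symmetric]) (auto simp: AG_out_def)
qed

end
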